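(* Let $\lambda\in\mathbb{R}$, let $$J_6=\begin{pmatrix}\lambda&1&0\\0&\lambda&1\\0&0&\lambda\end{pmatrix},$$ and $h>0$ with $\lambda h+2\neq 0$. Set $$\psi=\frac{e^{\lambda h}(2-\lambda h)}{\lambda h+2},\qquad \phi=\frac{h(e^{\lambda h}+1)}{\lambda h+2},\qquad \theta=\frac{1}{e^{\lambda h}+1}.$$ Then the difference scheme $$\frac{\mathbf{x}_{k+1}-\psi\mathbf{x}_k}{\phi}=J_6\big[\theta\mathbf{x}_{k+1}+(1-\theta)\mathbf{x}_k\big]$$ is exact for the system $\mathbf{x}'=J_6\mathbf{x}$.
   Context: A one-step difference scheme with step size $h>0$ for $\mathbf{x}'=M\mathbf{x}$ is called exact if for every initial vector $\mathbf{x}_0$ the sequence $(\mathbf{x}_k)$ it generates satisfies $\mathbf{x}_k=\mathbf{x}(kh)$ for all $k\ge 0$, where $\mathbf{x}(t)$ solves $\mathbf{x}'=M\mathbf{x}$, $\mathbf{x}(0)=\mathbf{x}_0$. *)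

theory Defs
  imports "HOL-Analysis.Analysis"
begin

text \<open>A one-step scheme is given by a relation step x_k x_{k+1}.\<close>

definition exact_scheme ::
  "real \<Rightarrow> (real^'n \<Rightarrow> real^'n \<Rightarrow> bool) \<Rightarrow> real^'n^'n \<Rightarrow> bool" where
  "exact_scheme h step M \<longleftrightarrow>
     (\<forall>x. \<exists>!y. step x y) \<and>
     (\<forall>x0 (xs :: nat \<Rightarrow> real^'n) (x :: real \<Rightarrow> real^'n).
        xs 0 = x0 \<and> (\<forall>k. step (xs k) (xs (Suc k))) \<and>
        x 0 = x0 \<and> (\<forall>t\<ge>0. (x has_vector_derivative (M *v x t)) (at t within {0..}))
        \<longrightarrow> (\<forall>k. xs k = x (real k * h)))"

definition J6 :: "real \<Rightarrow> real^3^3" where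
  "J6 lam = vector [vector [lam, 1, 0], vector [0, lam, 1], vector [0, 0, lam]]"

definition psi_c :: "real \<Rightarrow> real \<Rightarrow> real" where
  "psi_c lam h = exp (lam * h) * (2 - lam * h) / (lam * h + 2)"

definition phi_c :: "real \<Rightarrow> real \<Rightarrow> real" where
  "phi_c lam h = h * (exp (lam * h) + 1) / (lam * h + 2)"

definition theta_c :: "real \<Rightarrow> real \<Rightarrow> real" where
  "theta_c lam h = 1 / (exp (lam * h) + 1)"

end

theory Submission
  imports Defs
begin

text \<open>Write J6 = lam I + N with N nilpotent, N^3 = 0. Multiplying the scheme by
  h (e^(lam h) + 1) turns it into 2 (x_(k+1) - e^(lam h) x_k) = h N (x_(k+1) + e^(lam h) x_k),
  i.e. x_(k+1) = e^(lam h) (I - h N/2)^-1 (I + h N/2) x_k. Since N^3 = 0, this Cayley transform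
  equals exp (h N) = I + h N + h^2 N^2/2, so one step of the scheme is exactly the flow of
  x' = J6 x over time h. The flow itself is obtained componentwise by variation of constants,
  the system being upper triangular.\<close>

lemma J6_mult_vec_nth:
  "(J6 lam *v v) $ 1 = lam * v $ 1 + v $ 2"
  "(J6 lam *v v) $ 2 = lam * v $ 2 + v $ 3"
  "(J6 lam *v v) $ 3 = lam * v $ 3"
  by (simp_all add: J6_def matrix_vector_mult_def sum_3)

lemma has_real_derivative_vec_nth:
  assumes "(x has_vector_derivative v) F"
  shows "((\<lambda>t. x t $ i) has_real_derivative v $ i) F"
  using bounded_linear.has_vector_derivative[OF bounded_linear_vec_nth assms, of i]
  by (simp add: has_real_derivative_iff_has_vector_derivative)

lemma variation_of_constants:
  fixes f g G :: "real \<Rightarrow> real"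
  assumes "convex S" "a \<in> S" "t \<in> S"
    and f: "\<And>s. s \<in> S \<Longrightarrow> (f has_real_derivative lam * f s + exp (lam * s) * g s) (at s within S)"
    and G: "\<And>s. s \<in> S \<Longrightarrow> (G has_real_derivative g s) (at s within S)"
  shows "exp (- lam * t) * f t - G t = exp (- lam * a) * f a - G a"
proof -
  let ?c = "\<lambda>s. exp (- lam * s) * f s - G s"
  have "(?c has_real_derivative 0) (at s within S)" if "s \<in> S" for s
  proof -
    have "(?c has_real_derivative
        - lam * exp (- lam * s) * f s + exp (- lam * s) * (lam * f s + exp (lam * s) * g s) - g s)
        (at s within S)"
      using that by (auto intro!: derivative_eq_intros f G)
    then show ?thesis
      by (simp add: algebra_simps flip: exp_add)
  qed
  then obtain c where "\<forall>s\<in>S. ?c s = c"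
    using has_field_derivative_zero_constant[OF \<open>convex S\<close>] by blast
  then show ?thesis
    using assms(2,3) by simp
qed

definition J6_flow :: "real \<Rightarrow> real \<Rightarrow> real^3 \<Rightarrow> real^3" where
  "J6_flow lam t u = exp (lam * t) *\<^sub>R
     vector [u $ 1 + t * u $ 2 + t\<^sup>2 / 2 * u $ 3, u $ 2 + t * u $ 3, u $ 3]"

lemma J6_flow_vec_nth:
  "J6_flow lam t u $ 1 = exp (lam * t) * (u $ 1 + t * u $ 2 + t\<^sup>2 / 2 * u $ 3)"
  "J6_flow lam t u $ 2 = exp (lam * t) * (u $ 2 + t * u $ 3)"
  "J6_flow lam t u $ 3 = exp (lam * t) * u $ 3"
  by (simp_all add: J6_flow_def)

lemma J6_flow_0: "J6_flow lam 0 u = u"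
  by (simp add: vec_eq_iff forall_3 J6_flow_vec_nth)

lemma J6_flow_add: "J6_flow lam (s + t) u = J6_flow lam t (J6_flow lam s u)"
  by (simp add: vec_eq_iff forall_3 J6_flow_vec_nth exp_add power2_eq_square algebra_simps)

lemma J6_solution_eq_flow:
  fixes x :: "real \<Rightarrow> real^3"
  assumes ode: "\<forall>t\<ge>0. (x has_vector_derivative (J6 lam *v x t)) (at t within {0..})"
    and "t \<ge> 0"
  shows "x t = J6_flow lam t (x 0)"
proof -
  have comp: "((\<lambda>t. x t $ i) has_real_derivative (J6 lam *v x s) $ i) (at s within {0..})"
    if "s \<in> {0..}" for i s
    using ode that by (auto intro: has_real_derivative_vec_nth)
  have solve: "x s $ i = exp (lam * s) * (x 0 $ i + G s)"
    if "s \<ge> 0"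
      and row: "\<And>s. s \<ge> 0 \<Longrightarrow> (J6 lam *v x s) $ i = lam * x s $ i + exp (lam * s) * g s"
      and G: "\<And>s. s \<ge> 0 \<Longrightarrow> (G has_real_derivative g s) (at s within {0..})"
      and "G 0 = 0"
      for i g G s
  proof -
    have "exp (- lam * s) * x s $ i - G s = exp (- lam * 0) * x 0 $ i - G 0"
    proof (rule variation_of_constants[where S = "{0..}"])
      show "((\<lambda>t. x t $ i) has_real_derivative lam * x t $ i + exp (lam * t) * g t)
          (at t within {0..})" if "t \<in> {0..}" for t
        using comp[of t i] row[of t] that by simp
    qed (use G \<open>s \<ge> 0\<close> in auto)
    then show ?thesis
      using \<open>G 0 = 0\<close> by (simp add: field_simps exp_minus)
  qed
  have x3: "x s $ 3 = exp (lam * s) * (x 0 $ 3 + 0)" if "s \<ge> 0" for s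
    using that by (rule solve[where g = "\<lambda>_. 0"]) (simp_all add: J6_mult_vec_nth)
  have x2: "x s $ 2 = exp (lam * s) * (x 0 $ 2 + s * x 0 $ 3)" if "s \<ge> 0" for s
    using that
  proof (rule solve[where g = "\<lambda>_. x 0 $ 3"])
    show "(J6 lam *v x t) $ 2 = lam * x t $ 2 + exp (lam * t) * x 0 $ 3" if "t \<ge> 0" for t
      using x3[OF that] by (simp add: J6_mult_vec_nth)
  qed (auto intro!: derivative_eq_intros)
  have x1: "x s $ 1 = exp (lam * s) * (x 0 $ 1 + (s * x 0 $ 2 + s\<^sup>2 / 2 * x 0 $ 3))"
    if "s \<ge> 0" for s
    using that
  proof (rule solve[where g = "\<lambda>t. x 0 $ 2 + t * x 0 $ 3"])
    show "(J6 lam *v x t) $ 1 = lam * x t $ 1 + exp (lam * t) * (x 0 $ 2 + t * x 0 $ 3)"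
      if "t \<ge> 0" for t
      using x2[OF that] by (simp add: J6_mult_vec_nth)
  qed (auto intro!: derivative_eq_intros)
  show ?thesis
    using x1[OF \<open>t \<ge> 0\<close>] x2[OF \<open>t \<ge> 0\<close>] x3[OF \<open>t \<ge> 0\<close>]
    by (simp add: vec_eq_iff forall_3 J6_flow_vec_nth)
qed

lemma scheme_component_iff:
  fixes lam h u v a b :: real
  assumes "h > 0" and "lam * h + 2 \<noteq> 0"
  shows "(1 / phi_c lam h) * (v - psi_c lam h * u) =
      lam * (theta_c lam h * v + (1 - theta_c lam h) * u) + (theta_c lam h * a + (1 - theta_c lam h) * b)
    \<longleftrightarrow> v = exp (lam * h) * u + h / 2 * (a + exp (lam * h) * b)"
    (is "?lhs = ?rhs \<longleftrightarrow> _")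
proof -
  define E where "E = exp (lam * h)"
  have "E + 1 \<noteq> 0"
    unfolding E_def by (smt (verit) exp_gt_zero)
  then have K: "h * (E + 1) \<noteq> 0"
    using assms by simp
  have "h * (E + 1) * (1 / phi_c lam h) = lam * h + 2"
    using K unfolding phi_c_def E_def[symmetric] by simp
  moreover have "(lam * h + 2) * psi_c lam h = E * (2 - lam * h)"
    using assms(2) unfolding psi_c_def E_def[symmetric] by simp
  ultimately have "h * (E + 1) * ?lhs = (lam * h + 2) * v - E * (2 - lam * h) * u"
    by (metis (no_types, opaque_lifting) mult.assoc right_diff_distrib)
  moreover have "h * (E + 1) * ?rhs = h * lam * (v + E * u) + h * (a + E * b)"
  proof -
    have "(E + 1) * theta_c lam h = 1"
      using \<open>E + 1 \<noteq> 0\<close> unfolding theta_c_def E_def[symmetric] by simp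
    then have mean: "(E + 1) * (theta_c lam h * p + (1 - theta_c lam h) * q) = p + E * q" for p q
      by (simp add: algebra_simps)
    have "h * (E + 1) * ?rhs = h * lam * ((E + 1) * (theta_c lam h * v + (1 - theta_c lam h) * u))
        + h * ((E + 1) * (theta_c lam h * a + (1 - theta_c lam h) * b))"
      by (simp only: algebra_simps)
    then show ?thesis
      by (simp only: mean)
  qed
  ultimately have "?lhs = ?rhs \<longleftrightarrow>
      (lam * h + 2) * v - E * (2 - lam * h) * u = h * lam * (v + E * u) + h * (a + E * b)"
    using K by (metis mult_cancel_left)
  also have "\<dots> \<longleftrightarrow> v = E * u + h / 2 * (a + E * b)"
    by (simp add: field_simps)
  finally show ?thesis
    unfolding E_def .
qed

lemma J6_scheme_step_iff:
  fixes u v :: "real^3"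
  assumes "h > 0" and "lam * h + 2 \<noteq> 0"
  shows "(1 / phi_c lam h) *\<^sub>R (v - psi_c lam h *\<^sub>R u) =
      J6 lam *v (theta_c lam h *\<^sub>R v + (1 - theta_c lam h) *\<^sub>R u)
    \<longleftrightarrow> v = J6_flow lam h u"
proof -
  let ?E = "exp (lam * h)"
  have "(1 / phi_c lam h) *\<^sub>R (v - psi_c lam h *\<^sub>R u) =
      J6 lam *v (theta_c lam h *\<^sub>R v + (1 - theta_c lam h) *\<^sub>R u)
    \<longleftrightarrow> v $ 3 = ?E * u $ 3 + h / 2 * (0 + ?E * 0)
      \<and> v $ 2 = ?E * u $ 2 + h / 2 * (v $ 3 + ?E * u $ 3)
      \<and> v $ 1 = ?E * u $ 1 + h / 2 * (v $ 2 + ?E * u $ 2)"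
    using scheme_component_iff[OF assms, of "v $ 1" "u $ 1" "v $ 2" "u $ 2"]
      scheme_component_iff[OF assms, of "v $ 2" "u $ 2" "v $ 3" "u $ 3"]
      scheme_component_iff[OF assms, of "v $ 3" "u $ 3" 0 0]
    by (auto simp: vec_eq_iff forall_3 J6_mult_vec_nth)
  also have "\<dots> \<longleftrightarrow> v = J6_flow lam h u"
    by (auto simp: vec_eq_iff forall_3 J6_flow_vec_nth algebra_simps power2_eq_square cong: conj_cong)
  finally show ?thesis .
qed

theorem theorem10:
  fixes lam h :: real
  assumes "h > 0" and "lam * h + 2 \<noteq> 0"
  shows "exact_scheme h
           (\<lambda>xk xk1. (1 / phi_c lam h) *\<^sub>R (xk1 - psi_c lam h *\<^sub>R xk) =
               J6 lam *v (theta_c lam h *\<^sub>R xk1 + (1 - theta_c lam h) *\<^sub>R xk))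
           (J6 lam)"
  unfolding exact_scheme_def J6_scheme_step_iff[OF assms]
proof (intro conjI allI impI)
  fix u :: "real^3"
  show "\<exists>!v. v = J6_flow lam h u"
    by simp
next
  fix x0 xs and x :: "real \<Rightarrow> real^3" and k :: nat
  assume "xs 0 = x0 \<and> (\<forall>k. xs (Suc k) = J6_flow lam h (xs k)) \<and> x 0 = x0 \<and>
    (\<forall>t\<ge>0. (x has_vector_derivative J6 lam *v x t) (at t within {0..}))"
  then have start: "xs 0 = x0" "x 0 = x0" and step: "\<And>k. xs (Suc k) = J6_flow lam h (xs k)"
    and ode: "\<forall>t\<ge>0. (x has_vector_derivative J6 lam *v x t) (at t within {0..})"
    by auto
  have "xs k = J6_flow lam (real k * h) x0"
  proof (induction k)
    case (Suc k)
    then show ?case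
      using J6_flow_add[of lam "real k * h" h x0] by (simp add: step algebra_simps)
  qed (simp add: start J6_flow_0)
  also have "\<dots> = x (real k * h)"
    using J6_solution_eq_flow[OF ode] start \<open>h > 0\<close> by simp
  finally show "xs k = x (real k * h)" .
qed

end
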